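(* Let $X_{\Omega_1}$ and $X_{\Omega_2}$ be convex toric domains and assume there exists $r>0$ such that $X_{\Omega_1}\subset B^4(r)\subset X_{\Omega_2}$. Let $\{\Phi_t\}_{t\in[0,1]}\subset\mathrm{Sp}(4,\mathbb{R})$ be the loop \[\Phi_t(z_1,z_2)=\begin{cases}(e^{4\pi i t}z_1,z_2), & t\in[0,\tfrac12],\\ (z_1,e^{-4\pi i t}z_2), & t\in[\tfrac12,1].\end{cases}\] Then the loop $\{\varphi_t=\Phi_t|_{X_{\Omega_1}}\}_{t\in[0,1]}$ is contractible in $\mathrm{SympEmb}(X_{\Omega_1},X_{\Omega_2})$.
   Context: For $\Omega\subset\mathbb{R}^2_{\geq0}$, $X_\Omega=\{(z_1,z_2)\in\mathbb{C}^2 \mid \pi(|z_1|^2,|z_2|^2)\in\Omega\}$ with the restriction of $\omega_{\mathrm{std}}$. A convex toric domain is $X_\Omega$ with $\Omega=\{(x,y)\mid 0\le x\le a,\ 0\le y\le f(x)\}$ and $f:[0,a]\to\mathbb{R}_{\ge0}$ nonincreasing and concave. $B^4(r)=\{(z_1,z_2)\mid \pi|z_1|^2+\pi|z_2|^2\le r\}$. $\mathrm{SympEmb}(M,N)$ is the space of symplectic embeddings of $M$ into $N$. *)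

theory Defs
  imports "HOL-Analysis.Analysis"
begin

type_synonym C2 = "complex \<times> complex"

definition toric_domain :: "(real \<times> real) set \<Rightarrow> C2 set" where
  "toric_domain \<Omega> = {(z1, z2). (pi * (cmod z1)^2, pi * (cmod z2)^2) \<in> \<Omega>}"

definition convex_toric_domain :: "C2 set \<Rightarrow> bool" where
  "convex_toric_domain X \<longleftrightarrow>
     (\<exists>(a::real) (f::real \<Rightarrow> real).
        (\<forall>x\<in>{0..a}. f x \<ge> 0) \<and>
        (\<forall>x\<in>{0..a}. \<forall>y\<in>{0..a}. x \<le> y \<longrightarrow> f y \<le> f x) \<and>
        concave_on {0..a} f \<and>
        X = toric_domain {(x, y). 0 \<le> x \<and> x \<le> a \<and> 0 \<le> y \<and> y \<le> f x})"

definition ball4 :: "real \<Rightarrow> C2 set" where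
  "ball4 r = {(z1, z2). pi * (cmod z1)^2 + pi * (cmod z2)^2 \<le> r}"

text \<open>Standard symplectic form on C^2 (z = x + iy, omega = dx1/\dy1 + dx2/\dy2).\<close>
definition omega_std :: "C2 \<Rightarrow> C2 \<Rightarrow> real" where
  "omega_std u v = Im (cnj (fst u) * fst v) + Im (cnj (snd u) * snd v)"

fun dderiv :: "'a::real_normed_vector list \<Rightarrow> ('a \<Rightarrow> 'b::real_normed_vector) \<Rightarrow> 'a \<Rightarrow> 'b" where
  "dderiv [] f = f"
| "dderiv (v # vs) f = (\<lambda>x. frechet_derivative (dderiv vs f) (at x) v)"

text \<open>C^infinity on an open set: all iterated derivatives exist (hence are continuous).\<close>
definition smooth_on :: "'a::real_normed_vector set \<Rightarrow> ('a \<Rightarrow> 'b::real_normed_vector) \<Rightarrow> bool" where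
  "smooth_on U f \<longleftrightarrow> (\<forall>vs. \<forall>x\<in>U. dderiv vs f differentiable (at x))"

definition symp_emb :: "C2 set \<Rightarrow> C2 set \<Rightarrow> (C2 \<Rightarrow> C2) \<Rightarrow> bool" where
  "symp_emb X1 X2 \<phi> \<longleftrightarrow>
     (\<exists>U. open U \<and> X1 \<subseteq> U \<and> smooth_on U \<phi> \<and>
        (\<forall>x\<in>U. \<forall>u v. omega_std (frechet_derivative \<phi> (at x) u) (frechet_derivative \<phi> (at x) v)
                        = omega_std u v)) \<and>
     inj_on \<phi> X1 \<and> \<phi> ` X1 \<subseteq> X2"

text \<open>A family of symplectic embeddings parametrised by P is continuous in the C^infinity
  topology of SympEmb(X1,X2) (X1 compact): every iterated derivative, restricted to X1,
  depends jointly continuously on (parameter, point).\<close>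
definition symp_emb_family :: "'p::topological_space set \<Rightarrow> C2 set \<Rightarrow> C2 set \<Rightarrow> ('p \<Rightarrow> C2 \<Rightarrow> C2) \<Rightarrow> bool" where
  "symp_emb_family P X1 X2 H \<longleftrightarrow>
     (\<forall>p\<in>P. symp_emb X1 X2 (H p)) \<and>
     (\<forall>vs. continuous_on (P \<times> X1) (\<lambda>(p, z). dderiv vs (H p) z))"

definition contractible_loop_SympEmb :: "C2 set \<Rightarrow> C2 set \<Rightarrow> (real \<Rightarrow> C2 \<Rightarrow> C2) \<Rightarrow> bool" where
  "contractible_loop_SympEmb X1 X2 \<gamma> \<longleftrightarrow>
     (\<exists>H :: real \<times> real \<Rightarrow> C2 \<Rightarrow> C2.
        symp_emb_family ({0..1} \<times> {0..1}) X1 X2 H \<and>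
        (\<forall>t\<in>{0..1}. \<forall>z\<in>X1. H (0, t) z = \<gamma> t z) \<and>
        (\<forall>s\<in>{0..1}. \<forall>z\<in>X1. H (s, 0) z = H (s, 1) z) \<and>
        (\<forall>t\<in>{0..1}. \<forall>z\<in>X1. H (1, t) z = H (1, 0) z))"

definition Phi_loop :: "real \<Rightarrow> C2 \<Rightarrow> C2" where
  "Phi_loop t = (\<lambda>(z1, z2).
     if t \<le> 1/2 then (exp (\<i> * complex_of_real (4 * pi * t)) * z1, z2)
     else (z1, exp (- \<i> * complex_of_real (4 * pi * t)) * z2))"

end

theory Submission
  imports Defs
begin

text \<open>Unitary maps of \<open>\<complex>\<^sup>2\<close> are linear, preserve \<open>\<omega>_std\<close> and preserve every ball
  \<open>B\<^sup>4(r)\<close>, so U(2) acts by symplectic embeddings of \<open>X\<^sub>1 \<subseteq> B\<^sup>4(r)\<close> into \<open>X\<^sub>2\<close>, with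
  all derivatives depending continuously on the matrix; it therefore suffices to contract \<open>\<Phi>\<close>
  inside U(2). There \<open>\<Phi>\<^sub>t = diag(e^(2\<pi>ia), e^(-2\<pi>ib))\<close>, where \<open>a\<close> winds once around the
  circle during the first half and \<open>b\<close> during the second, so the determinant loop has degree
  \<open>1 - 1 = 0\<close>. Straightening \<open>(a, b)\<close> to \<open>(t, t)\<close> moves the loop into SU(2) = \<open>S\<^sup>3\<close>,
  which is simply connected, and an explicit rotation contracts it there to the constant map
  \<open>(z\<^sub>1, z\<^sub>2) \<mapsto> (-z\<^sub>2, z\<^sub>1)\<close>.\<close>

lemma frechet_derivative_bounded_linear:
  "bounded_linear L \<Longrightarrow> frechet_derivative L (at x) = L"
  by (metis bounded_linear_imp_has_derivative frechet_derivative_at)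

lemma dderiv_bounded_linear:
  assumes "bounded_linear L"
  shows "dderiv vs L = (case vs of [] \<Rightarrow> L | [v] \<Rightarrow> (\<lambda>_. L v) | _ \<Rightarrow> (\<lambda>_. 0))"
proof (induction vs)
  case (Cons v vs)
  then show ?case
    by (cases vs) (auto simp: frechet_derivative_bounded_linear[OF assms] split: list.splits)
qed simp

lemma smooth_on_bounded_linear:
  assumes "bounded_linear L" shows "smooth_on U L"
  unfolding smooth_on_def dderiv_bounded_linear[OF assms]
  using bounded_linear_imp_differentiable[OF assms]
  by (auto split: list.splits)

lemma continuous_on_dderiv_linear_family:
  assumes lin: "\<And>p. p \<in> P \<Longrightarrow> bounded_linear (H p)"
    and cont: "continuous_on (P \<times> UNIV) (\<lambda>(p, z). H p z)"
  shows "continuous_on (P \<times> X) (\<lambda>(p, z). dderiv vs (H p) z)"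
proof -
  have cont_X: "continuous_on (P \<times> X) (\<lambda>(p, z). H p z)"
    using cont by (rule continuous_on_subset) auto
  have cont_v: "continuous_on (P \<times> X) (\<lambda>(p, z). H p v)" for v
    using continuous_on_compose2[OF cont, of "P \<times> X" "\<lambda>x. (fst x, v)"]
    by (force simp: case_prod_unfold intro: continuous_intros)
  consider "vs = []" | v where "vs = [v]" | v w ws where "vs = v # w # ws"
    by (metis list.exhaust)
  then have "continuous_on (P \<times> X)
      (\<lambda>(p, z). case vs of [] \<Rightarrow> H p z | [v] \<Rightarrow> H p v | _ \<Rightarrow> 0)"
    by cases (simp_all add: cont_X cont_v continuous_on_const)
  then show ?thesis
    by (rule continuous_on_eq) (auto simp: dderiv_bounded_linear lin split: list.split)
qed

definition herm_C2 :: "C2 \<Rightarrow> C2 \<Rightarrow> complex" where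
  "herm_C2 u v = cnj (fst u) * fst v + cnj (snd u) * snd v"

lemma omega_std_herm_C2: "omega_std u v = Im (herm_C2 u v)"
  by (simp add: omega_std_def herm_C2_def)

lemma cnj_mult_self: "cnj z * z = complex_of_real ((cmod z)\<^sup>2)"
  by (metis complex_norm_square mult.commute)

lemma herm_C2_self: "herm_C2 u u = complex_of_real ((norm u)\<^sup>2)"
  by (cases u) (simp add: herm_C2_def norm_Pair cnj_mult_self del: of_real_power)

definition unitary_C2 :: "(C2 \<Rightarrow> C2) \<Rightarrow> bool" where
  "unitary_C2 L \<longleftrightarrow> bounded_linear L \<and> (\<forall>u v. herm_C2 (L u) (L v) = herm_C2 u v)"

lemma unitary_C2_norm:
  assumes "unitary_C2 L" shows "norm (L u) = norm u"
proof -
  have "complex_of_real ((norm (L u))\<^sup>2) = complex_of_real ((norm u)\<^sup>2)"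
    using assms unfolding unitary_C2_def herm_C2_self[symmetric] by blast
  then show ?thesis by (simp add: power2_eq_iff_nonneg del: of_real_power)
qed

lemma unitary_C2_inj:
  assumes "unitary_C2 L" shows "inj L"
proof (rule injI)
  fix u v assume "L u = L v"
  then have "norm (L (u - v)) = 0"
    using assms by (simp add: unitary_C2_def linear_diff bounded_linear.linear)
  then show "u = v" using unitary_C2_norm[OF assms] by simp
qed

lemma ball4_eq: "ball4 r = {z. pi * (norm z)\<^sup>2 \<le> r}"
  by (auto simp: ball4_def norm_Pair distrib_left)

lemma unitary_C2_ball4: "unitary_C2 L \<Longrightarrow> L ` ball4 r \<subseteq> ball4 r"
  by (auto simp: ball4_eq unitary_C2_norm)

lemma symp_emb_unitary_C2:
  assumes "unitary_C2 L" "L ` X1 \<subseteq> X2"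
  shows "symp_emb X1 X2 L"
proof -
  have lin: "bounded_linear L" and herm: "herm_C2 (L u) (L v) = herm_C2 u v" for u v
    using assms(1) unfolding unitary_C2_def by blast+
  have "omega_std (frechet_derivative L (at x) u) (frechet_derivative L (at x) v) = omega_std u v"
    for x u v
    by (simp add: frechet_derivative_bounded_linear[OF lin] omega_std_herm_C2 herm)
  moreover have "inj_on L X1"
    using unitary_C2_inj[OF assms(1)] by (rule inj_on_subset) simp
  ultimately show ?thesis
    unfolding symp_emb_def using smooth_on_bounded_linear[OF lin] assms(2) by blast
qed

lemma symp_emb_family_unitary_C2:
  assumes "\<And>p. p \<in> P \<Longrightarrow> unitary_C2 (H p)" "\<And>p. p \<in> P \<Longrightarrow> H p ` X1 \<subseteq> X2"
    and "continuous_on (P \<times> UNIV) (\<lambda>(p, z). H p z)"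
  shows "symp_emb_family P X1 X2 H"
  using assms
  by (auto simp: symp_emb_family_def unitary_C2_def symp_emb_unitary_C2
      intro!: continuous_on_dderiv_linear_family)

text \<open>The matrix \<open>((\<alpha>, -cnj \<beta> \<gamma>), (\<beta>, cnj \<alpha> \<gamma>))\<close>: for \<open>|\<alpha>|^2 + |\<beta>|^2 = 1\<close> and \<open>|\<gamma>| = 1\<close>
  these are exactly the elements of U(2), \<open>\<gamma>\<close> being the determinant.\<close>

definition u2_map :: "complex \<Rightarrow> complex \<Rightarrow> complex \<Rightarrow> C2 \<Rightarrow> C2" where
  "u2_map \<alpha> \<beta> \<gamma> z = (\<alpha> * fst z - cnj \<beta> * \<gamma> * snd z, \<beta> * fst z + cnj \<alpha> * \<gamma> * snd z)"

lemma bounded_linear_u2_map: "bounded_linear (u2_map \<alpha> \<beta> \<gamma>)"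
  unfolding u2_map_def
  by (intro bounded_linear_Pair bounded_linear_add bounded_linear_sub
      bounded_linear_mult_right[THEN bounded_linear_compose] bounded_linear_fst bounded_linear_snd)

lemma unitary_C2_u2_map:
  assumes "(cmod \<alpha>)\<^sup>2 + (cmod \<beta>)\<^sup>2 = 1" "cmod \<gamma> = 1"
  shows "unitary_C2 (u2_map \<alpha> \<beta> \<gamma>)"
proof -
  have ab: "cnj \<alpha> * \<alpha> + cnj \<beta> * \<beta> = 1" and g: "cnj \<gamma> * \<gamma> = 1"
    using assms by (simp_all add: cnj_mult_self del: of_real_power flip: of_real_add)
  have "herm_C2 (u2_map \<alpha> \<beta> \<gamma> u) (u2_map \<alpha> \<beta> \<gamma> v)
      = (cnj \<alpha> * \<alpha> + cnj \<beta> * \<beta>) * cnj (fst u) * fst v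
        + (cnj \<alpha> * \<alpha> + cnj \<beta> * \<beta>) * (cnj \<gamma> * \<gamma>) * cnj (snd u) * snd v" for u v
    by (simp add: herm_C2_def u2_map_def algebra_simps)
  then show ?thesis
    by (simp add: unitary_C2_def bounded_linear_u2_map ab g herm_C2_def)
qed

lemma continuous_on_u2_map [continuous_intros]:
  "continuous_on S \<alpha> \<Longrightarrow> continuous_on S \<beta> \<Longrightarrow> continuous_on S \<gamma> \<Longrightarrow> continuous_on S z
   \<Longrightarrow> continuous_on S (\<lambda>x. u2_map (\<alpha> x) (\<beta> x) (\<gamma> x) (z x))"
  unfolding u2_map_def by (intro continuous_intros)

text \<open>\<open>Phi_loop t = diag (cis (2 pi angle1 0 t), cis (-2 pi angle2 0 t))\<close>; at \<open>s = 1\<close> both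
  angles equal \<open>t\<close>.\<close>

definition angle1 :: "real \<Rightarrow> real \<Rightarrow> real" where
  "angle1 s t = (1 - s) * min (2 * t) 1 + s * t"

definition angle2 :: "real \<Rightarrow> real \<Rightarrow> real" where
  "angle2 s t = (1 - s) * max (2 * t - 1) 0 + s * t"

definition Phi_homotopy :: "real \<times> real \<Rightarrow> C2 \<Rightarrow> C2" where
  "Phi_homotopy p = (case p of (s, t) \<Rightarrow>
     u2_map (of_real (cos (pi * s / 2)) * cis (2 * pi * angle1 s t)) (of_real (sin (pi * s / 2)))
       (cis (2 * pi * (angle1 s t - angle2 s t))))"

lemma unitary_C2_Phi_homotopy: "unitary_C2 (Phi_homotopy p)"
  by (cases p) (simp add: Phi_homotopy_def norm_mult unitary_C2_u2_map)

lemma continuous_on_angle1 [continuous_intros]: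
  "continuous_on S f \<Longrightarrow> continuous_on S g \<Longrightarrow> continuous_on S (\<lambda>x. angle1 (f x) (g x))"
  unfolding angle1_def by (intro continuous_intros)

lemma continuous_on_angle2 [continuous_intros]:
  "continuous_on S f \<Longrightarrow> continuous_on S g \<Longrightarrow> continuous_on S (\<lambda>x. angle2 (f x) (g x))"
  unfolding angle2_def by (intro continuous_intros)

lemma continuous_on_Phi_homotopy: "continuous_on UNIV (\<lambda>(p, z). Phi_homotopy p z)"
  unfolding Phi_homotopy_def case_prod_unfold
  by (auto intro!: continuous_intros)

lemma u2_map_diagonal: "u2_map (cis a) 0 (cis (a - b)) z = (cis a * fst z, cis (- b) * snd z)"
  by (simp add: u2_map_def cis_cnj cis_mult)

lemma Phi_homotopy_0:
  "Phi_homotopy (0, t) z = (cis (2 * pi * angle1 0 t) * fst z, cis (- (2 * pi * angle2 0 t)) * snd z)"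
  by (simp add: Phi_homotopy_def right_diff_distrib u2_map_diagonal)

lemma Phi_homotopy_start: "Phi_homotopy (0, t) = Phi_loop t"
proof
  fix z :: C2
  show "Phi_homotopy (0, t) z = Phi_loop t z"
  proof (cases "t \<le> 1/2")
    case True
    then have "angle1 0 t = 2 * t" "angle2 0 t = 0"
      by (simp_all add: angle1_def angle2_def)
    with True show ?thesis
      by (cases z) (simp add: Phi_homotopy_0 Phi_loop_def cis_conv_exp mult.assoc)
  next
    case False
    then have angle2: "angle2 0 t = 2 * t - 1"
      by (simp add: angle2_def)
    have "cis (- (2 * pi * angle2 0 t)) = cis (2 * pi) * cis (- (4 * pi * t))"
      unfolding cis_mult angle2 by (simp add: algebra_simps)
    also have "\<dots> = cis (- (4 * pi * t))"
      by simp
    also have "\<dots> = exp (- \<i> * complex_of_real (4 * pi * t))"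
      by (simp add: cis_conv_exp)
    finally have "cis (- (2 * pi * angle2 0 t)) = exp (- \<i> * complex_of_real (4 * pi * t))" .
    moreover from False have "cis (2 * pi * angle1 0 t) = 1"
      by (simp add: angle1_def)
    ultimately show ?thesis
      using False by (cases z) (simp add: Phi_homotopy_0 Phi_loop_def)
  qed
qed

lemma Phi_homotopy_closed: "Phi_homotopy (s, 0) = Phi_homotopy (s, 1)"
proof -
  have "angle1 s 0 = 0" "angle2 s 0 = 0" "angle1 s 1 = 1" "angle2 s 1 = 1"
    by (simp_all add: angle1_def angle2_def)
  then show ?thesis by (simp add: Phi_homotopy_def)
qed

lemma Phi_homotopy_end: "Phi_homotopy (1, t) = Phi_homotopy (1, 0)"
  by (simp add: Phi_homotopy_def angle1_def angle2_def)

theorem proposition1p10: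
  fixes X1 X2 :: "C2 set" and r :: real
  assumes "convex_toric_domain X1" and "convex_toric_domain X2"
    and "r > 0" and "X1 \<subseteq> ball4 r" and "ball4 r \<subseteq> X2"
  shows "contractible_loop_SympEmb X1 X2 (\<lambda>t. restrict (Phi_loop t) X1)"
proof -
  \<comment> \<open>Only the two inclusions through the ball are needed.\<close>
  have "Phi_homotopy p ` X1 \<subseteq> X2" for p
    using unitary_C2_ball4[OF unitary_C2_Phi_homotopy, of p r] assms(4,5) by blast
  then have "symp_emb_family ({0..1} \<times> {0..1}) X1 X2 Phi_homotopy"
    using unitary_C2_Phi_homotopy continuous_on_subset[OF continuous_on_Phi_homotopy, of "_ \<times> UNIV"]
    by (intro symp_emb_family_unitary_C2) auto
  moreover have "\<forall>t\<in>{0..1}. \<forall>z\<in>X1. Phi_homotopy (0, t) z = restrict (Phi_loop t) X1 z"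
    by (simp add: Phi_homotopy_start)
  moreover have "\<forall>s\<in>{0..1}. \<forall>z\<in>X1. Phi_homotopy (s, 0) z = Phi_homotopy (s, 1) z"
    by (simp add: Phi_homotopy_closed)
  moreover have "\<forall>t\<in>{0..1}. \<forall>z\<in>X1. Phi_homotopy (1, t) z = Phi_homotopy (1, 0) z"
    by (metis Phi_homotopy_end)
  ultimately show ?thesis
    unfolding contractible_loop_SympEmb_def by blast
qed

end
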